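(* Let $G=(V,E,s_0,s_1)$ be a switch graph, $o,d\in V$ with $o\neq d$, and let $e=(v,w)\in E$ be a hopeful edge of desperation $k$. Then $\textsc{Run}(G,o,d)$ traverses $e$ at most $2^{k+1}-1$ times.
   Context: A switch graph is a 4-tuple $G=(V,E,s_0,s_1)$ where $V$ is a finite vertex set, $s_0,s_1:V\to V$, and $E=\{(v,s_0(v)):v\in V\}\cup\{(v,s_1(v)):v\in V\}$ (loops allowed; possibly $s_0(v)=s_1(v)$). The procedure $\textsc{Run}(G,o,d)$: maintain arrays $\mathtt{s\_curr},\mathtt{s\_next}$ indexed by $V$, initially $\mathtt{s\_curr}[v]=s_0(v)$, $\mathtt{s\_next}[v]=s_1(v)$; set $v:=o$; while $v\neq d$: $w:=\mathtt{s\_curr}[v]$, swap $\mathtt{s\_curr}[v],\mathtt{s\_next}[v]$, $v:=w$ (traversing edge $(v,w)$); the run may be infinite. A dead end is a vertex from which there is no directed path to $d$ in the directed graph $(V,E)$. An edge $(v,w)$ is dead if $w$ is a dead end, and hopeful otherwise; the desperation of a hopeful edge $(v,w)$ is the length of a shortest directed path from $w$ to $d$ in $(V,E)$ (so desperation $0$ means $w=d$). *)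

theory Defs
  imports Main
begin

definition switch_graph :: "'a set \<Rightarrow> ('a \<Rightarrow> 'a) \<Rightarrow> ('a \<Rightarrow> 'a) \<Rightarrow> bool" where
  "switch_graph V s0 s1 \<longleftrightarrow> finite V \<and> (\<forall>v\<in>V. s0 v \<in> V \<and> s1 v \<in> V)"

definition sg_edges :: "'a set \<Rightarrow> ('a \<Rightarrow> 'a) \<Rightarrow> ('a \<Rightarrow> 'a) \<Rightarrow> ('a \<times> 'a) set" where
  "sg_edges V s0 s1 = {(v, s0 v) | v. v \<in> V} \<union> {(v, s1 v) | v. v \<in> V}"

text \<open>State of Run: (current vertex, s_curr, s_next).\<close>
type_synonym 'a run_state = "'a \<times> ('a \<Rightarrow> 'a) \<times> ('a \<Rightarrow> 'a)"

text \<open>One iteration of the while loop; once the vertex is d the loop has stopped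
  and the state stays fixed.\<close>
definition run_step :: "'a \<Rightarrow> 'a run_state \<Rightarrow> 'a run_state" where
  "run_step d st = (case st of (v, sc, sn) \<Rightarrow>
     if v = d then (v, sc, sn)
     else (sc v, sc(v := sn v), sn(v := sc v)))"

definition run_state :: "('a \<Rightarrow> 'a) \<Rightarrow> ('a \<Rightarrow> 'a) \<Rightarrow> 'a \<Rightarrow> 'a \<Rightarrow> nat \<Rightarrow> 'a run_state" where
  "run_state s0 s1 o' d i = (run_step d ^^ i) (o', s0, s1)"

definition traversed_at :: "('a \<Rightarrow> 'a) \<Rightarrow> ('a \<Rightarrow> 'a) \<Rightarrow> 'a \<Rightarrow> 'a \<Rightarrow> nat \<Rightarrow> ('a \<times> 'a) option" where
  "traversed_at s0 s1 o' d i = (case run_state s0 s1 o' d i of (v, sc, sn) \<Rightarrow>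
     if v = d then None else Some (v, sc v))"

definition traversals :: "('a \<Rightarrow> 'a) \<Rightarrow> ('a \<Rightarrow> 'a) \<Rightarrow> 'a \<Rightarrow> 'a \<Rightarrow> 'a \<times> 'a \<Rightarrow> nat set" where
  "traversals s0 s1 o' d e = {i. traversed_at s0 s1 o' d i = Some e}"

definition hopeful :: "'a set \<Rightarrow> ('a \<Rightarrow> 'a) \<Rightarrow> ('a \<Rightarrow> 'a) \<Rightarrow> 'a \<Rightarrow> 'a \<times> 'a \<Rightarrow> bool" where
  "hopeful V s0 s1 d e \<longleftrightarrow> e \<in> sg_edges V s0 s1 \<and> (snd e, d) \<in> (sg_edges V s0 s1)\<^sup>*"

definition desperation :: "'a set \<Rightarrow> ('a \<Rightarrow> 'a) \<Rightarrow> ('a \<Rightarrow> 'a) \<Rightarrow> 'a \<Rightarrow> 'a \<times> 'a \<Rightarrow> nat" where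
  "desperation V s0 s1 d e = (LEAST n. (snd e, d) \<in> (sg_edges V s0 s1) ^^ n)"

end

theory Submission
  imports Defs "HOL-Library.Infinite_Set"
begin

text \<open>Each visit of the run to a vertex w \<noteq> d leaves w along the current switch and then
  flips it, so the two out-edges of w are used alternately: an out-edge (w, u) is traversed on
  at least every other visit, whence visits(w) \<le> 2 traversals(w, u) + 1. Every traversal of
  (v, w) is followed by a visit to w, so along a path of length k from w to d the
  bound doubles (plus one) at each step, starting from the fact that an edge into d is
  traversed at most once because the run stops there.\<close>

lemma card_Int_lessThan_Suc:
  "card (A \<inter> {..<Suc N}) = card (A \<inter> {..<N}) + (if N \<in> A then 1 else 0)"
  by (simp add: lessThan_Suc Int_insert_right)

lemma finite_card_le_if_initial_segments_card_le:
  fixes A :: "nat set"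
  assumes bound: "\<And>N. card (A \<inter> {..<N}) \<le> B"
  shows "finite A \<and> card A \<le> B"
proof -
  have "finite A"
  proof (rule ccontr)
    assume "infinite A"
    then obtain F where F: "F \<subseteq> A" "finite F" "card F = Suc B"
      using infinite_arbitrarily_large by blast
    then have "F \<subseteq> A \<inter> {..<Suc (Max F)}"
      by (auto simp: less_Suc_eq_le)
    then have "card F \<le> card (A \<inter> {..<Suc (Max F)})"
      by (intro card_mono) auto
    with bound[of "Suc (Max F)"] F(3) show False by simp
  qed
  moreover from this obtain N where "A \<subseteq> {..<N}"
    using finite_nat_iff_bounded by blast
  then have "A \<inter> {..<N} = A" by blast
  ultimately show ?thesis using bound[of N] by simp
qed

context
  fixes s0 s1 :: "'a \<Rightarrow> 'a" and o' d :: 'a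
begin

definition run_vertex :: "nat \<Rightarrow> 'a" where
  "run_vertex i = fst (run_state s0 s1 o' d i)"

definition run_curr :: "nat \<Rightarrow> 'a \<Rightarrow> 'a" where
  "run_curr i = fst (snd (run_state s0 s1 o' d i))"

definition run_next :: "nat \<Rightarrow> 'a \<Rightarrow> 'a" where
  "run_next i = snd (snd (run_state s0 s1 o' d i))"

lemma run_state_Suc_eq:
  "run_state s0 s1 o' d (Suc i) = run_step d (run_vertex i, run_curr i, run_next i)"
  by (simp add: run_state_def run_vertex_def run_curr_def run_next_def)

lemma run_vertex_Suc:
  "run_vertex (Suc i) = (if run_vertex i = d then d else run_curr i (run_vertex i))"
  by (simp add: run_vertex_def [of "Suc i"] run_state_Suc_eq run_step_def)

lemma run_curr_Suc:
  "run_curr (Suc i) =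
    (if run_vertex i = d then run_curr i else (run_curr i)(run_vertex i := run_next i (run_vertex i)))"
  by (simp add: run_curr_def [of "Suc i"] run_state_Suc_eq run_step_def)

lemma run_next_Suc:
  "run_next (Suc i) =
    (if run_vertex i = d then run_next i else (run_next i)(run_vertex i := run_curr i (run_vertex i)))"
  by (simp add: run_next_def [of "Suc i"] run_state_Suc_eq run_step_def)

lemma run_switch_pair: "{run_curr i x, run_next i x} = {s0 x, s1 x}"
proof (induction i)
  case 0
  then show ?case by (simp add: run_curr_def run_next_def run_state_def)
next
  case (Suc i)
  then show ?case by (auto simp: run_curr_Suc run_next_Suc)
qed

lemma run_vertex_stays_at_target:
  assumes "run_vertex i = d" and "i \<le> j"
  shows "run_vertex j = d"
  using assms(2)
proof (induction j rule: dec_induct)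
  case base
  show ?case using assms(1) .
next
  case (step j)
  then show ?case by (simp add: run_vertex_Suc)
qed

lemma mem_traversals_iff:
  "i \<in> traversals s0 s1 o' d (v, w) \<longleftrightarrow> run_vertex i = v \<and> v \<noteq> d \<and> run_curr i v = w"
  by (auto simp: traversals_def traversed_at_def run_vertex_def run_curr_def
      split: prod.splits if_splits)

lemma run_vertex_Suc_if_traversal:
  "i \<in> traversals s0 s1 o' d (v, w) \<Longrightarrow> run_vertex (Suc i) = w"
  by (simp add: mem_traversals_iff run_vertex_Suc)

lemma traversals_into_target_eq:
  assumes "i \<in> traversals s0 s1 o' d (v, d)" and "j \<in> traversals s0 s1 o' d (v, d)"
  shows "i = j"
proof -
  have "\<not> i < j" if "i \<in> traversals s0 s1 o' d (v, d)" "j \<in> traversals s0 s1 o' d (v, d)"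
    for i j
  proof
    assume "i < j"
    have "run_vertex (Suc i) = d" using that(1) by (rule run_vertex_Suc_if_traversal)
    with \<open>i < j\<close> have "run_vertex j = d" by (simp add: run_vertex_stays_at_target)
    moreover have "run_vertex j \<noteq> d" using that(2) by (simp add: mem_traversals_iff)
    ultimately show False by contradiction
  qed
  with assms show ?thesis by (meson linorder_neqE_nat)
qed

lemma card_traversals_into_target_le_1:
  "finite (traversals s0 s1 o' d (v, d)) \<and> card (traversals s0 s1 o' d (v, d)) \<le> 1"
proof (cases "traversals s0 s1 o' d (v, d) = {}")
  case False
  then obtain i where "i \<in> traversals s0 s1 o' d (v, d)" by blast
  then have "traversals s0 s1 o' d (v, d) = {i}" using traversals_into_target_eq by blast
  then show ?thesis by simp
qed simp

lemma card_visits_le_traversals_out: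
  assumes "w \<noteq> d" and "u = s0 w \<or> u = s1 w"
  shows "card ({j. run_vertex j = w} \<inter> {..<N})
    \<le> 2 * card (traversals s0 s1 o' d (w, u) \<inter> {..<N}) + (if run_curr N w = u then 1 else 0)"
proof (induction N)
  case 0
  then show ?case by simp
next
  case (Suc N)
  have traversal: "N \<in> traversals s0 s1 o' d (w, u) \<longleftrightarrow> run_vertex N = w \<and> run_curr N w = u"
    using assms(1) by (simp add: mem_traversals_iff)
  show ?case
  proof (cases "run_vertex N = w")
    case True
    \<comment> \<open>the visit flips the switch, and u is one of its two positions\<close>
    have "run_curr (Suc N) w = run_next N w" using True assms(1) by (simp add: run_curr_Suc)
    moreover have "u \<in> {run_curr N w, run_next N w}" using run_switch_pair[of N w] assms(2) by auto
    ultimately show ?thesis using Suc.IH True traversal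
      by (auto simp: card_Int_lessThan_Suc)
  next
    case False
    then have "run_curr (Suc N) w = run_curr N w" by (simp add: run_curr_Suc)
    then show ?thesis using Suc.IH False traversal
      by (auto simp: card_Int_lessThan_Suc)
  qed
qed

lemma card_traversals_le_visits:
  "card (traversals s0 s1 o' d (v, w) \<inter> {..<N}) \<le> card ({j. run_vertex j = w} \<inter> {..<Suc N})"
proof (rule card_inj_on_le[where f = Suc])
  show "Suc ` (traversals s0 s1 o' d (v, w) \<inter> {..<N}) \<subseteq> {j. run_vertex j = w} \<inter> {..<Suc N}"
    by (auto simp: run_vertex_Suc_if_traversal)
qed simp_all

lemma card_traversals_le_if_path_to_target:
  assumes "(w, d) \<in> (sg_edges V s0 s1) ^^ k"
  shows "finite (traversals s0 s1 o' d (v, w)) \<and> card (traversals s0 s1 o' d (v, w)) \<le> 2 ^ (k + 1) - 1"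
  using assms
proof (induction k arbitrary: v w)
  case 0
  then show ?case using card_traversals_into_target_le_1[of v] by simp
next
  case (Suc k)
  show ?case
  proof (cases "w = d")
    case True
    have "(1::nat) < 2 ^ (Suc k + 1)" by (rule one_less_power) simp_all
    then show ?thesis using card_traversals_into_target_le_1[of v] True by auto
  next
    case False
    from Suc.prems obtain u where wu: "(w, u) \<in> sg_edges V s0 s1"
      and ud: "(u, d) \<in> (sg_edges V s0 s1) ^^ k"
      by (meson relpow_Suc_D2)
    from wu have u: "u = s0 w \<or> u = s1 w" by (auto simp: sg_edges_def)
    from Suc.IH[OF ud] have fin: "finite (traversals s0 s1 o' d (w, u))"
      and IH: "card (traversals s0 s1 o' d (w, u)) \<le> 2 ^ (k + 1) - 1" by auto
    have "card (traversals s0 s1 o' d (v, w) \<inter> {..<N}) \<le> 2 ^ (Suc k + 1) - 1" for N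
    proof -
      have "card (traversals s0 s1 o' d (v, w) \<inter> {..<N})
          \<le> 2 * card (traversals s0 s1 o' d (w, u) \<inter> {..<Suc N}) + 1"
        using card_traversals_le_visits[of v w N] card_visits_le_traversals_out[OF False u, of "Suc N"]
        by (auto split: if_splits)
      also have "\<dots> \<le> 2 * card (traversals s0 s1 o' d (w, u)) + 1"
        using fin by (simp add: card_mono)
      also have "\<dots> \<le> 2 * (2 ^ (k + 1) - 1) + 1" using IH by simp
      also have "\<dots> = 2 ^ (Suc k + 1) - 1"
      proof -
        have "0 < (2::nat) ^ (k + 1)" by simp
        then have "2 * (2 ^ (k + 1) - 1) + 1 = 2 * 2 ^ (k + 1) - (1::nat)" by linarith
        then show ?thesis by simp
      qed
      finally show ?thesis .
    qed
    then show ?thesis by (rule finite_card_le_if_initial_segments_card_le)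
  qed
qed

end

theorem lemma2:
  fixes V :: "'a set" and s0 s1 :: "'a \<Rightarrow> 'a" and o' d v w :: 'a and k :: nat
  assumes "switch_graph V s0 s1"
    and "o' \<in> V" and "d \<in> V" and "o' \<noteq> d"
    and "hopeful V s0 s1 d (v, w)"
    and "desperation V s0 s1 d (v, w) = k"
  shows "finite (traversals s0 s1 o' d (v, w))
         \<and> card (traversals s0 s1 o' d (v, w)) \<le> 2 ^ (k + 1) - 1"
proof -
  from assms(5) obtain n where "(w, d) \<in> (sg_edges V s0 s1) ^^ n"
    by (auto simp: hopeful_def rtrancl_power)
  then have "(w, d) \<in> (sg_edges V s0 s1) ^^ k"
    using assms(6) unfolding desperation_def by (metis LeastI snd_conv)
  then show ?thesis by (rule card_traversals_le_if_path_to_target)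
qed

end
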